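(* For every $n\ge 4$, $w^4(P_n)\ge \lceil n/4\rceil$, where $P_n$ is the path on $n$ vertices.
   Context: All graphs are finite, simple and undirected. For a graph $G$, a permutation $\sigma$ of $V(G)$ is a 2-placement of $G$ if for every edge $ab\in E(G)$, $\sigma(a)\sigma(b)\notin E(G)$. $G^k$ denotes the $k$-th power of $G$ (same vertex set, distinct vertices adjacent iff their distance in $G$ is at most $k$); $\sigma(G)\subseteq G^k$ means that for every edge $ab$ of $G$, $dist_G(\sigma(a),\sigma(b))\le k$. A (surjective) mapping $f:V(G)\to\{1,\dots,p\}$ is a $p$-labeled-packing of $G$ into $G^k$ if there exists a permutation $\sigma$ of $V(G)$ such that $\sigma$ is a 2-placement of $G$, $\sigma(G)\subseteq G^k$, and $f(\sigma(v))=f(v)$ for every vertex $v$. The labeled packing $k$-power number $w^k(G)$ is the maximum $p$ for which $G$ admits a $p$-labeled-packing into $G^k$. *)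

theory Defs
  imports Main
begin

text \<open>A finite simple graph is given by a vertex set V and a symmetric, irreflexive
edge relation E (only edges between vertices of V are considered).\<close>

definition edge_rel :: "'a set \<Rightarrow> ('a \<Rightarrow> 'a \<Rightarrow> bool) \<Rightarrow> ('a \<times> 'a) set" where
  "edge_rel V E = {(a, b). a \<in> V \<and> b \<in> V \<and> E a b}"

definition dist_le :: "'a set \<Rightarrow> ('a \<Rightarrow> 'a \<Rightarrow> bool) \<Rightarrow> nat \<Rightarrow> 'a \<Rightarrow> 'a \<Rightarrow> bool" where
  "dist_le V E k a b \<longleftrightarrow> (\<exists>m\<le>k. (a, b) \<in> (edge_rel V E) ^^ m)"

definition two_placement :: "'a set \<Rightarrow> ('a \<Rightarrow> 'a \<Rightarrow> bool) \<Rightarrow> ('a \<Rightarrow> 'a) \<Rightarrow> bool" where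
  "two_placement V E \<sigma> \<longleftrightarrow> bij_betw \<sigma> V V \<and>
     (\<forall>a\<in>V. \<forall>b\<in>V. E a b \<longrightarrow> \<not> E (\<sigma> a) (\<sigma> b))"

definition image_in_power :: "'a set \<Rightarrow> ('a \<Rightarrow> 'a \<Rightarrow> bool) \<Rightarrow> nat \<Rightarrow> ('a \<Rightarrow> 'a) \<Rightarrow> bool" where
  "image_in_power V E k \<sigma> \<longleftrightarrow> (\<forall>a\<in>V. \<forall>b\<in>V. E a b \<longrightarrow> dist_le V E k (\<sigma> a) (\<sigma> b))"

definition labeled_packing ::
  "'a set \<Rightarrow> ('a \<Rightarrow> 'a \<Rightarrow> bool) \<Rightarrow> nat \<Rightarrow> nat \<Rightarrow> ('a \<Rightarrow> nat) \<Rightarrow> bool" where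
  "labeled_packing V E k p f \<longleftrightarrow> f ` V = {1..p} \<and>
     (\<exists>\<sigma>. two_placement V E \<sigma> \<and> image_in_power V E k \<sigma> \<and> (\<forall>v\<in>V. f (\<sigma> v) = f v))"

definition w_power :: "'a set \<Rightarrow> ('a \<Rightarrow> 'a \<Rightarrow> bool) \<Rightarrow> nat \<Rightarrow> nat" where
  "w_power V E k = (GREATEST p. \<exists>f. labeled_packing V E k p f)"

definition path_V :: "nat \<Rightarrow> nat set" where
  "path_V n = {0..<n}"

definition path_E :: "nat \<Rightarrow> nat \<Rightarrow> nat \<Rightarrow> bool" where
  "path_E n i j \<longleftrightarrow> i < n \<and> j < n \<and> (i + 1 = j \<or> j + 1 = i)"

end

theory Submission
  imports Defs
begin

text \<open>
  Every edge of the path joins two consecutive vertices, so a permutation \<sigma> of the vertices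
  is a 2-placement of \<open>P\<^sub>n\<close> into \<open>P\<^sub>n\<^sup>4\<close> as soon as consecutive vertices are sent to vertices
  at distance between 2 and 4. Cut the path into consecutive blocks, each permuted within
  itself and carrying its own label: blocks of four vertices use the pattern 1, 3, 0, 2, and
  the remaining vertices are absorbed by a fixed vertex followed by a block of size 4, 5 or 6
  (patterns 1, 3, 0, 2 / 1, 3, 0, 2, 4 / 1, 3, 5, 2, 0, 4). Where two blocks meet, the images
  are again 2 to 4 apart, and there are \<open>\<lceil>n/4\<rceil>\<close> blocks.
\<close>

lemma path_edge_relpow:
  assumes "a + d < n"
  shows "(a, a + d) \<in> edge_rel (path_V n) (path_E n) ^^ d \<and>
    (a + d, a) \<in> edge_rel (path_V n) (path_E n) ^^ d"
  using assms
proof (induction d)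
  case (Suc d)
  let ?R = "edge_rel (path_V n) (path_E n)"
  have "(a + d, a + Suc d) \<in> ?R" "(a + Suc d, a + d) \<in> ?R"
    using Suc.prems by (auto simp: edge_rel_def path_V_def path_E_def)
  moreover have "(a, a + d) \<in> ?R ^^ d" "(a + d, a) \<in> ?R ^^ d"
    using Suc by simp_all
  ultimately show ?case
    by (blast intro: relpow_Suc_I relpow_Suc_I2)
qed simp

lemma dist_le_path:
  assumes "a < n" "b < n" "\<bar>int a - int b\<bar> \<le> int k"
  shows "dist_le (path_V n) (path_E n) k a b"
proof (cases "a \<le> b")
  case True
  then have "(a, a + (b - a)) \<in> edge_rel (path_V n) (path_E n) ^^ (b - a)" "b - a \<le> k"
    using assms(2,3) path_edge_relpow[of a "b - a" n] by auto
  then show ?thesis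
    using True by (auto simp: dist_le_def)
next
  case False
  then have "(b + (a - b), b) \<in> edge_rel (path_V n) (path_E n) ^^ (a - b)" "a - b \<le> k"
    using assms(1,3) path_edge_relpow[of b "a - b" n] by auto
  then show ?thesis
    using False by (auto simp: dist_le_def)
qed

lemma labeled_packing_le_w_power:
  assumes "finite V" "labeled_packing V E k p f"
  shows "p \<le> w_power V E k"
  unfolding w_power_def
proof (rule Greatest_le_nat[where b = "card V"])
  show "\<exists>f. labeled_packing V E k p f"
    using assms(2) by blast
  show "q \<le> card V" if "\<exists>f. labeled_packing V E k q f" for q
    using that assms(1) by (metis card_atLeastAtMost card_image_le diff_Suc_1 labeled_packing_def)
qed

definition hop :: "nat \<Rightarrow> nat \<Rightarrow> nat \<Rightarrow> bool" where
  "hop k x y \<longleftrightarrow> 2 \<le> \<bar>int x - int y\<bar> \<and> \<bar>int x - int y\<bar> \<le> int k"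

lemma hop_commute: "hop k x y \<longleftrightarrow> hop k y x"
  by (auto simp: hop_def)

lemma hop_add_left [simp]: "hop k (c + x) (c + y) \<longleftrightarrow> hop k x y"
  by (simp add: hop_def)

definition hop_packing :: "nat \<Rightarrow> nat \<Rightarrow> nat \<Rightarrow> (nat \<Rightarrow> nat) \<Rightarrow> (nat \<Rightarrow> nat) \<Rightarrow> bool" where
  "hop_packing k n p \<sigma> f \<longleftrightarrow> \<sigma> ` {0..<n} = {0..<n} \<and> successively (hop k) (map \<sigma> [0..<n]) \<and>
     (\<forall>v<n. f (\<sigma> v) = f v) \<and> f ` {0..<n} = {1..p}"

lemma labeled_packing_path_if_hop_packing:
  assumes "hop_packing k n p \<sigma> f"
  shows "labeled_packing (path_V n) (path_E n) k p f"
proof -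
  have image: "\<sigma> ` {0..<n} = {0..<n}" and hops: "successively (hop k) (map \<sigma> [0..<n])"
    and invariant: "\<forall>v<n. f (\<sigma> v) = f v" and labels: "f ` {0..<n} = {1..p}"
    using assms by (simp_all add: hop_packing_def)
  have "inj_on \<sigma> {0..<n}"
    using image by (simp add: inj_on_iff_eq_card)
  with image have bij: "bij_betw \<sigma> {0..<n} {0..<n}"
    by (simp add: bij_betw_def)
  have edge_hop: "hop k (\<sigma> a) (\<sigma> b)" if "path_E n a b" for a b
  proof -
    have "hop k (\<sigma> i) (\<sigma> (Suc i))" if "Suc i < n" for i
      using successively_nth[OF hops] that by simp
    with \<open>path_E n a b\<close> show ?thesis
      unfolding path_E_def by (auto simp: hop_commute)
  qed
  have "\<not> path_E n x y" if "hop k x y" for x y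
    using that by (auto simp: path_E_def hop_def)
  with bij edge_hop have "two_placement (path_V n) (path_E n) \<sigma>"
    unfolding two_placement_def path_V_def by blast
  moreover have "image_in_power (path_V n) (path_E n) k \<sigma>"
    unfolding image_in_power_def
  proof (intro ballI impI)
    fix a b assume "a \<in> path_V n" "b \<in> path_V n" "path_E n a b"
    then have "\<sigma> a < n" "\<sigma> b < n" "hop k (\<sigma> a) (\<sigma> b)"
      using image edge_hop by (auto simp: path_V_def)
    then show "dist_le (path_V n) (path_E n) k (\<sigma> a) (\<sigma> b)"
      by (intro dist_le_path) (simp_all add: hop_def)
  qed
  ultimately show ?thesis
    using invariant labels by (auto simp: labeled_packing_def path_V_def)
qed

text \<open>The same combinator concatenates permutations (\<open>c = a\<close>) and labellings (\<open>c\<close> = number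
  of labels used by the first piece).\<close>

definition glue :: "nat \<Rightarrow> nat \<Rightarrow> (nat \<Rightarrow> nat) \<Rightarrow> (nat \<Rightarrow> nat) \<Rightarrow> nat \<Rightarrow> nat" where
  "glue a c g h v = (if v < a then g v else c + h (v - a))"

lemma image_glue:
  "glue a c g h ` {0..<a + b} = g ` {0..<a} \<union> (+) c ` h ` {0..<b}"
proof -
  have "(+) c ` h ` {0..<b} = (\<lambda>v. c + h (v - a)) ` (\<lambda>v. v + a) ` {0..<b}"
    by (simp only: image_image) simp
  also have "\<dots> = glue a c g h ` {a..<a + b}"
    by (rule image_cong) (simp_all add: glue_def add.commute)
  finally have "glue a c g h ` {a..<a + b} = (+) c ` h ` {0..<b}" ..
  moreover have "glue a c g h ` {0..<a} = g ` {0..<a}"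
    by (rule image_cong) (simp_all add: glue_def)
  moreover have "{0..<a + b} = {0..<a} \<union> {a..<a + b}"
    by auto
  ultimately show ?thesis
    by (simp only: image_Un)
qed

lemma map_glue_upt:
  "map (glue a c g h) [0..<a + b] = map g [0..<a] @ map (\<lambda>v. c + h v) [0..<b]"
proof -
  have "[a..<a + b] = map (\<lambda>v. v + a) [0..<b]"
    by (simp add: map_add_upt add.commute)
  then show ?thesis
    by (simp add: upt_add_eq_append[of 0] glue_def)
qed

lemma hop_packing_glue:
  assumes "hop_packing k a p \<sigma> f" "hop_packing k b q \<tau> g" "0 < a" "0 < b"
    and "hop k (\<sigma> (a - 1)) (a + \<tau> 0)"
  shows "hop_packing k (a + b) (p + q) (glue a a \<sigma> \<tau>) (glue a p f g)"
  unfolding hop_packing_def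
proof (intro conjI allI impI)
  have images: "\<sigma> ` {0..<a} = {0..<a}" "\<tau> ` {0..<b} = {0..<b}"
    "f ` {0..<a} = {1..p}" "g ` {0..<b} = {1..q}"
    using assms(1,2) by (simp_all add: hop_packing_def)
  show "glue a a \<sigma> \<tau> ` {0..<a + b} = {0..<a + b}"
    unfolding image_glue images by (auto simp: image_iff)
  show "glue a p f g ` {0..<a + b} = {1..p + q}"
    unfolding image_glue images by (auto simp: image_iff)
  have "successively (hop k) (map \<sigma> [0..<a])"
    "successively (hop k) (map (\<lambda>v. a + \<tau> v) [0..<b])"
    using assms(1,2) by (simp_all add: hop_packing_def successively_map)
  moreover have "last (map \<sigma> [0..<a]) = \<sigma> (a - 1)" "hd (map (\<lambda>v. a + \<tau> v) [0..<b]) = a + \<tau> 0"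
    using assms(3,4) by (simp_all add: last_map hd_map)
  ultimately show "successively (hop k) (map (glue a a \<sigma> \<tau>) [0..<a + b])"
    using assms(5) by (simp add: map_glue_upt successively_append_iff)
next
  fix v assume "v < a + b"
  moreover have "\<sigma> ` {0..<a} \<subseteq> {0..<a}" "\<tau> ` {0..<b} \<subseteq> {0..<b}"
    "\<forall>v<a. f (\<sigma> v) = f v" "\<forall>v<b. g (\<tau> v) = g v"
    using assms(1,2) by (simp_all add: hop_packing_def)
  ultimately show "glue a p f g (glue a a \<sigma> \<tau> v) = glue a p f g v"
    by (auto simp: glue_def image_subset_iff)
qed

lemma hop_packing_block:
  assumes "length P = n" "set P = {0..<n}" "successively (hop k) P" "0 < n"
  shows "hop_packing k n 1 ((!) P) (\<lambda>_. 1)"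
proof -
  have "map ((!) P) [0..<n] = P"
    by (metis assms(1) map_nth)
  then have "(!) P ` {0..<n} = set P"
    by (metis set_map set_upt)
  with \<open>map ((!) P) [0..<n] = P\<close> show ?thesis
    using assms by (simp add: hop_packing_def map_nth image_constant_conv)
qed

lemma hop_packing_blocks:
  "hop_packing 4 1 1 ((!) [0]) (\<lambda>_. 1)"
  "hop_packing 4 4 1 ((!) [1, 3, 0, 2]) (\<lambda>_. 1)"
  "hop_packing 4 5 1 ((!) [1, 3, 0, 2, 4]) (\<lambda>_. 1)"
  "hop_packing 4 6 1 ((!) [1, 3, 5, 2, 0, 4]) (\<lambda>_. 1)"
  by (rule hop_packing_block; auto simp: hop_def atLeast0LessThan lessThan_nat_numeral)+

text \<open>The invariant \<open>\<sigma> 0 \<le> 1\<close> is what allows a block 1, 3, 0, 2, which ends at 2, to be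
  glued in front.\<close>

lemma ex_hop_packing:
  assumes "4 \<le> n"
  shows "\<exists>\<sigma> f. hop_packing 4 n ((n + 3) div 4) \<sigma> f \<and> \<sigma> 0 \<le> 1"
  using assms
proof (induction n rule: less_induct)
  case (less n)
  consider "n = 4" | "n = 5 \<or> n = 6 \<or> n = 7" | "8 \<le> n"
    using less.prems by linarith
  then show ?case
  proof cases
    case 1
    show ?thesis
    proof (intro exI conjI)
      show "hop_packing 4 n ((n + 3) div 4) ((!) [1, 3, 0, 2]) (\<lambda>_. 1)"
        using 1 hop_packing_blocks(2) by simp
    qed simp
  next
    case 2
    obtain P where P: "hop_packing 4 (n - 1) 1 ((!) P) (\<lambda>_. 1)" "P ! 0 = 1"
      using 2 hop_packing_blocks(2-4) by fastforce
    have "hop_packing 4 (1 + (n - 1)) (1 + 1) (glue 1 1 ((!) [0]) ((!) P)) (glue 1 1 (\<lambda>_. 1) (\<lambda>_. 1))"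
      using 2 P by (intro hop_packing_glue[OF hop_packing_blocks(1)]) (auto simp: hop_def)
    moreover have "1 + (n - 1) = n" "1 + 1 = (n + 3) div 4"
      using 2 by auto
    ultimately show ?thesis
      by (metis glue_def less_one nth_Cons_0 order.refl zero_le)
  next
    case 3
    have "\<exists>\<sigma> f. hop_packing 4 (n - 4) ((n - 4 + 3) div 4) \<sigma> f \<and> \<sigma> 0 \<le> 1"
      using 3 by (intro less.IH) auto
    then obtain \<sigma> f where IH: "hop_packing 4 (n - 4) ((n - 4 + 3) div 4) \<sigma> f" "\<sigma> 0 \<le> 1"
      by blast
    have "hop_packing 4 (4 + (n - 4)) (1 + (n - 4 + 3) div 4)
        (glue 4 4 ((!) [1, 3, 0, 2]) \<sigma>) (glue 4 1 (\<lambda>_. 1) f)"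
      using 3 IH by (intro hop_packing_glue[OF hop_packing_blocks(2)]) (auto simp: hop_def)
    moreover have "4 + (n - 4) = n" "1 + (n - 4 + 3) div 4 = (n + 3) div 4"
      using 3 by auto
    ultimately show ?thesis
      by (metis glue_def nth_Cons_0 order.refl zero_less_numeral)
  qed
qed

theorem corollary1p2:
  fixes n :: nat
  assumes "n \<ge> 4"
  shows "w_power (path_V n) (path_E n) 4 \<ge> (n + 3) div 4"
proof -
  obtain \<sigma> f where "hop_packing 4 n ((n + 3) div 4) \<sigma> f"
    using ex_hop_packing[OF assms] by blast
  then have "labeled_packing (path_V n) (path_E n) 4 ((n + 3) div 4) f"
    by (rule labeled_packing_path_if_hop_packing)
  then show ?thesis
    by (intro labeled_packing_le_w_power) (simp_all add: path_V_def)
qed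

end
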